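(* Let $P,Q\in\Gamma_n$ and $0<r\le R$ with $r\le p_i/q_i\le R$ for all $i$. Let $s,t\in\mathbb{R}$ with $0\le s\le4$ and $t\ge-1$. Then $$\frac{1}{R^{s+1}}\Big(\frac{R+1}{2}\Big)^{s-t-1}\big[(4-s)R+s\big]\Omega_t(Q\|P)\le\zeta_s(Q\|P)\le\frac{1}{r^{s+1}}\Big(\frac{r+1}{2}\Big)^{s-t-1}\big[(4-s)R+s\big]\Omega_t(Q\|P).$$
   Context: $\Gamma_n=\{P=(p_1,\dots,p_n): p_i>0,\ \sum_i p_i=1\}$, $n\ge2$. For $P,Q\in\Gamma_n$ and $s\in\mathbb{R}$: $\Omega_s(Q\|P)=[s(s-1)]^{-1}\big[\sum_i q_i\big(\frac{p_i+q_i}{2q_i}\big)^s-1\big]$ for $s\ne0,1$; $\Omega_0(Q\|P)=\sum_i q_i\ln\frac{2q_i}{p_i+q_i}$; $\Omega_1(Q\|P)=\sum_i\frac{p_i+q_i}{2}\ln\frac{p_i+q_i}{2q_i}$. $\zeta_s(Q\|P)=(s-1)^{-1}\sum_i(q_i-p_i)\big(\frac{p_i+q_i}{2p_i}\big)^{s-1}$ for $s\ne1$; $\zeta_1(Q\|P)=\sum_i(q_i-p_i)\ln\frac{p_i+q_i}{2p_i}$. *)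

theory Defs
  imports Complex_Main
begin

definition Gamma :: "nat \<Rightarrow> (nat \<Rightarrow> real) set" where
  "Gamma n = {p. (\<forall>i<n. p i > 0) \<and> (\<Sum>i<n. p i) = 1}"

definition Omega :: "real \<Rightarrow> nat \<Rightarrow> (nat \<Rightarrow> real) \<Rightarrow> (nat \<Rightarrow> real) \<Rightarrow> real" where
  "Omega s n q p =
    (if s = 0 then (\<Sum>i<n. q i * ln (2 * q i / (p i + q i)))
     else if s = 1 then (\<Sum>i<n. (p i + q i) / 2 * ln ((p i + q i) / (2 * q i)))
     else ((\<Sum>i<n. q i * ((p i + q i) / (2 * q i)) powr s) - 1) / (s * (s - 1)))"

definition zeta :: "real \<Rightarrow> nat \<Rightarrow> (nat \<Rightarrow> real) \<Rightarrow> (nat \<Rightarrow> real) \<Rightarrow> real" where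
  "zeta s n q p =
    (if s = 1 then (\<Sum>i<n. (q i - p i) * ln ((p i + q i) / (2 * p i)))
     else (\<Sum>i<n. (q i - p i) * ((p i + q i) / (2 * p i)) powr (s - 1)) / (s - 1))"

end

theory Submission
  imports Defs "HOL-Analysis.Convex"
begin

(* Both quantities are Csiszar f-divergences D_f(Q||P) = sum_i q_i f(p_i/q_i) with f(1) = 0:
   Omega_t for f_t(x) = (((x+1)/2)^t - 1)/(t(t-1)) and zeta_s for g_s(x) = (1-x)((x+1)/(2x))^(s-1)/(s-1)
   (with logarithms at the singular exponents). Their second derivatives satisfy g_s'' = rho f_t'' with
   rho(x) = ((x+1)/2)^(-t-1) ((x+1)/(2x))^s (4 - s + s/x), a product of nonnegative nonincreasing
   factors when 0 <= s <= 4 and t >= -1. Hence rho(R) f_t'' <= g_s'' <= rho(r) f_t'' on [r, R], so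
   g_s - rho(R) f_t and rho(r) f_t - g_s are convex there and vanish at 1, and Jensen's inequality at
   the mean sum_i q_i (p_i/q_i) = 1 shows that their divergences are nonnegative. The upper constant of
   the theorem is rho(r) with (4-s)r + s enlarged to (4-s)R + s. *)

definition f_divergence :: "(real \<Rightarrow> real) \<Rightarrow> nat \<Rightarrow> (nat \<Rightarrow> real) \<Rightarrow> (nat \<Rightarrow> real) \<Rightarrow> real"
  where "f_divergence f n q p = (\<Sum>i<n. q i * f (p i / q i))"

lemma f_divergence_nonneg:
  assumes "p \<in> Gamma n" "q \<in> Gamma n"
    and "convex_on I f" "f 1 = 0" "\<And>i. i < n \<Longrightarrow> p i / q i \<in> I"
  shows "0 \<le> f_divergence f n q p"
proof -
  have pos: "\<And>i. i < n \<Longrightarrow> p i > 0 \<and> q i > 0" and sums: "(\<Sum>i<n. p i) = 1" "(\<Sum>i<n. q i) = 1"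
    using assms(1,2) by (auto simp: Gamma_def)
  have "(\<Sum>i<n. q i *\<^sub>R (p i / q i)) = (\<Sum>i<n. p i)"
    using pos by (intro sum.cong) fastforce+
  then have mean: "(\<Sum>i<n. q i *\<^sub>R (p i / q i)) = 1"
    using sums(1) by simp
  have "f (\<Sum>i<n. q i *\<^sub>R (p i / q i)) \<le> (\<Sum>i<n. q i * f (p i / q i))"
    using sums(2) by (intro convex_on_sum[OF _ _ assms(3)]) (auto simp: pos less_imp_le assms(5))
  then show ?thesis
    unfolding mean assms(4) f_divergence_def .
qed

lemma f_divergence_diff:
  "f_divergence (\<lambda>x. f x - g x) n q p = f_divergence f n q p - f_divergence g n q p"
  by (simp add: f_divergence_def right_diff_distrib sum_subtractf)

lemma f_divergence_cmult:
  "f_divergence (\<lambda>x. c * f x) n q p = c * f_divergence f n q p"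
  by (simp add: f_divergence_def sum_distrib_left mult.left_commute)

lemma f_divergence_mono_deriv2:
  assumes "p \<in> Gamma n" "q \<in> Gamma n" "convex I" "\<And>i. i < n \<Longrightarrow> p i / q i \<in> I"
    and "\<And>x. x \<in> I \<Longrightarrow> (f has_real_derivative f' x) (at x)"
    and "\<And>x. x \<in> I \<Longrightarrow> (f' has_real_derivative f'' x) (at x)"
    and "\<And>x. x \<in> I \<Longrightarrow> (g has_real_derivative g' x) (at x)"
    and "\<And>x. x \<in> I \<Longrightarrow> (g' has_real_derivative g'' x) (at x)"
    and "\<And>x. x \<in> I \<Longrightarrow> f'' x \<le> g'' x" and "f 1 = g 1"
  shows "f_divergence f n q p \<le> f_divergence g n q p"
proof -
  have "convex_on I (\<lambda>x. g x - f x)"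
    using assms(3,5-9)
    by (intro f''_ge0_imp_convex[where f' = "\<lambda>x. g' x - f' x" and f'' = "\<lambda>x. g'' x - f'' x"])
       (auto intro!: derivative_eq_intros)
  then have "0 \<le> f_divergence (\<lambda>x. g x - f x) n q p"
    using assms(1,2,4,10) by (intro f_divergence_nonneg) auto
  then show ?thesis
    by (simp add: f_divergence_diff)
qed

lemma f_divergence_bounds_by_deriv2_ratio:
  assumes "p \<in> Gamma n" "q \<in> Gamma n" "convex I" "\<And>i. i < n \<Longrightarrow> p i / q i \<in> I"
    and "\<And>x. x \<in> I \<Longrightarrow> (f has_real_derivative f' x) (at x)"
    and "\<And>x. x \<in> I \<Longrightarrow> (f' has_real_derivative f'' x) (at x)"
    and "\<And>x. x \<in> I \<Longrightarrow> (g has_real_derivative g' x) (at x)"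
    and "\<And>x. x \<in> I \<Longrightarrow> (g' has_real_derivative g'' x) (at x)"
    and "\<And>x. x \<in> I \<Longrightarrow> g'' x = \<rho> x * f'' x"
    and "\<And>x. x \<in> I \<Longrightarrow> f'' x \<ge> 0"
    and "\<And>x. x \<in> I \<Longrightarrow> c \<le> \<rho> x \<and> \<rho> x \<le> C"
    and "f 1 = 0" "g 1 = 0"
  shows "c * f_divergence f n q p \<le> f_divergence g n q p \<and> f_divergence g n q p \<le> C * f_divergence f n q p"
proof -
  have deriv2_bounds: "c * f'' x \<le> g'' x" "g'' x \<le> C * f'' x" if "x \<in> I" for x
    using assms(9-11)[OF that] by (simp_all add: mult_right_mono)
  have "f_divergence (\<lambda>x. c * f x) n q p \<le> f_divergence g n q p"
    using assms deriv2_bounds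
    by (intro f_divergence_mono_deriv2[where f' = "\<lambda>x. c * f' x" and f'' = "\<lambda>x. c * f'' x"
          and g' = g' and g'' = g'']) (auto intro: DERIV_cmult)
  moreover have "f_divergence g n q p \<le> f_divergence (\<lambda>x. C * f x) n q p"
    using assms deriv2_bounds
    by (intro f_divergence_mono_deriv2[where f' = g' and f'' = g''
          and g' = "\<lambda>x. C * f' x" and g'' = "\<lambda>x. C * f'' x"]) (auto intro: DERIV_cmult)
  ultimately show ?thesis
    by (simp add: f_divergence_cmult)
qed

text \<open>Treats the logarithmic cases of the definitions uniformly with the power cases.\<close>
definition powr_primitive :: "real \<Rightarrow> real \<Rightarrow> real"
  where "powr_primitive a y = (if a = 0 then ln y else y powr a / a)"

lemma has_real_derivative_powr_primitive:
  assumes "y > 0"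
  shows "(powr_primitive a has_real_derivative y powr (a - 1)) (at y)"
proof (cases "a = 0")
  case True
  then have "powr_primitive a = ln"
    by (simp add: fun_eq_iff powr_primitive_def)
  then show ?thesis
    using assms True by (auto intro!: derivative_eq_intros simp: powr_minus_divide)
next
  case False
  then have "powr_primitive a = (\<lambda>y. y powr a / a)"
    by (simp add: fun_eq_iff powr_primitive_def)
  then show ?thesis
    using assms False by (auto intro!: derivative_eq_intros)
qed

declare has_real_derivative_powr_primitive[THEN DERIV_chain2, derivative_intros]

definition omega_gen :: "real \<Rightarrow> real \<Rightarrow> real"
  where "omega_gen t x =
    (if t = 0 then - ln ((x + 1) / 2)
     else if t = 1 then (x + 1) / 2 * ln ((x + 1) / 2)
     else (((x + 1) / 2) powr t - 1) / (t * (t - 1)))"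

definition omega_gen_deriv :: "real \<Rightarrow> real \<Rightarrow> real"
  where "omega_gen_deriv t x = (powr_primitive (t - 1) ((x + 1) / 2) + (if t = 1 then 1 else 0)) / 2"

lemma has_real_derivative_omega_gen:
  assumes "x > -1"
  shows "(omega_gen t has_real_derivative omega_gen_deriv t x) (at x)"
proof -
  consider "t = 0" | "t = 1" | "t \<noteq> 0" "t \<noteq> 1" by blast
  then show ?thesis
  proof cases
    case 1
    then have "omega_gen t = (\<lambda>x. - ln ((x + 1) / 2))"
      by (simp add: fun_eq_iff omega_gen_def)
    with 1 assms show ?thesis
      by (auto intro!: derivative_eq_intros simp: omega_gen_deriv_def powr_primitive_def powr_minus field_simps)
  next
    case 2
    then have "omega_gen t = (\<lambda>x. (x + 1) / 2 * ln ((x + 1) / 2))"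
      by (simp add: fun_eq_iff omega_gen_def)
    with 2 assms show ?thesis
      by (auto intro!: derivative_eq_intros simp: omega_gen_deriv_def powr_primitive_def field_simps)
  next
    case 3
    then have "omega_gen t = (\<lambda>x. (((x + 1) / 2) powr t - 1) / (t * (t - 1)))"
      by (simp add: fun_eq_iff omega_gen_def)
    moreover have "t - 1 \<noteq> 0"
      using 3 by simp
    ultimately show ?thesis
      using 3 assms by (auto intro!: derivative_eq_intros simp: omega_gen_deriv_def powr_primitive_def)
  qed
qed

lemma has_real_derivative_omega_gen_deriv:
  assumes "x > -1"
  shows "(omega_gen_deriv t has_real_derivative ((x + 1) / 2) powr (t - 2) / 4) (at x)"
  unfolding omega_gen_deriv_def using assms
  by (auto intro!: derivative_eq_intros simp: field_simps)

lemma omega_gen_at_1 [simp]: "omega_gen t 1 = 0"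
  by (simp add: omega_gen_def)

lemma Omega_eq_f_divergence:
  assumes "\<And>i. i < n \<Longrightarrow> p i > 0" "\<And>i. i < n \<Longrightarrow> q i > 0" "(\<Sum>i<n. q i) = 1"
  shows "Omega t n q p = f_divergence (omega_gen t) n q p"
proof -
  have "q i * omega_gen t (p i / q i) =
     (if t = 0 then q i * ln (2 * q i / (p i + q i))
      else if t = 1 then (p i + q i) / 2 * ln ((p i + q i) / (2 * q i))
      else (q i * ((p i + q i) / (2 * q i)) powr t - q i) / (t * (t - 1)))"
    if "i < n" for i
  proof -
    have arg: "(p i / q i + 1) / 2 = (p i + q i) / (2 * q i)"
      and coeff: "q i * ((p i + q i) / (2 * q i)) = (p i + q i) / 2"
      using assms(1,2)[OF that] by (simp_all add: field_simps)
    have log: "ln (2 * q i / (p i + q i)) = - ln ((p i + q i) / (2 * q i))"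
      using assms(1,2)[OF that] by (simp add: ln_div)
    show ?thesis
      unfolding omega_gen_def arg by (simp add: log coeff mult.assoc[symmetric] right_diff_distrib)
  qed
  then show ?thesis
    using assms(3) by (simp add: Omega_def f_divergence_def sum_subtractf flip: sum_divide_distrib)
qed

definition zeta_gen :: "real \<Rightarrow> real \<Rightarrow> real"
  where "zeta_gen s x = (1 - x) * powr_primitive (s - 1) ((x + 1) / (2 * x))"

definition zeta_gen_deriv :: "real \<Rightarrow> real \<Rightarrow> real"
  where "zeta_gen_deriv s x =
    - powr_primitive (s - 1) ((x + 1) / (2 * x)) - (1 - x) * ((x + 1) / (2 * x)) powr (s - 2) / (2 * x\<^sup>2)"

lemma has_real_derivative_zeta_gen:
  assumes "x > 0"
  shows "(zeta_gen s has_real_derivative zeta_gen_deriv s x) (at x)"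
  unfolding zeta_gen_def[abs_def] using assms
  by (auto intro!: derivative_eq_intros simp: zeta_gen_deriv_def field_simps power2_eq_square)

lemma has_real_derivative_zeta_gen_deriv:
  assumes "x > 0"
  shows "(zeta_gen_deriv s has_real_derivative
           ((x + 1) / (2 * x)) powr (s - 3) * ((4 - s) * x + s) / (4 * x ^ 4)) (at x)"
proof -
  have split: "((x + 1) / (2 * x)) powr (s - 2) = (x + 1) / (2 * x) * ((x + 1) / (2 * x)) powr (s - 3)"
    using assms powr_mult_base[of "(x + 1) / (2 * x)" "s - 3"] by simp
  show ?thesis
    unfolding zeta_gen_deriv_def[abs_def] using assms
    by (auto intro!: derivative_eq_intros simp: split) (simp add: field_simps eval_nat_numeral)
qed

lemma zeta_gen_at_1 [simp]: "zeta_gen s 1 = 0"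
  by (simp add: zeta_gen_def)

lemma zeta_eq_f_divergence:
  assumes "\<And>i. i < n \<Longrightarrow> p i > 0" "\<And>i. i < n \<Longrightarrow> q i > 0"
  shows "zeta s n q p = f_divergence (zeta_gen s) n q p"
proof -
  have "q i * zeta_gen s (p i / q i) = (q i - p i) * powr_primitive (s - 1) ((p i + q i) / (2 * p i))"
    if "i < n" for i
  proof -
    have arg: "(p i / q i + 1) / (2 * (p i / q i)) = (p i + q i) / (2 * p i)"
      and coeff: "q i * (1 - p i / q i) = q i - p i"
      using assms[OF that] by (simp_all add: field_simps)
    show ?thesis
      by (simp only: zeta_gen_def arg mult.assoc[symmetric] coeff)
  qed
  then show ?thesis
    by (simp add: zeta_def f_divergence_def powr_primitive_def sum_divide_distrib)
qed

definition deriv2_ratio :: "real \<Rightarrow> real \<Rightarrow> real \<Rightarrow> real"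
  where "deriv2_ratio s t x = ((x + 1) / 2) powr (- t - 1) * ((x + 1) / (2 * x)) powr s * (4 - s + s / x)"

lemma zeta_gen_deriv2_eq:
  assumes "x > 0"
  shows "((x + 1) / (2 * x)) powr (s - 3) * ((4 - s) * x + s) / (4 * x ^ 4)
           = deriv2_ratio s t x * (((x + 1) / 2) powr (t - 2) / 4)"
proof -
  define y where "y = (x + 1) / 2"
  have "y > 0" and u: "(x + 1) / (2 * x) = y / x"
    using assms by (auto simp: y_def)
  have powrs: "y powr (- t - 1) = 1 / (y powr t * y)" "y powr (t - 2) = y powr t / y\<^sup>2"
    "(y / x) powr (s - 3) = (y / x) powr s / (y / x) ^ 3"
    using \<open>y > 0\<close> assms by (simp_all add: powr_diff powr_minus_divide)
  show ?thesis
    unfolding deriv2_ratio_def y_def[symmetric] u powrs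
    using \<open>y > 0\<close> assms by (simp add: field_simps eval_nat_numeral)
qed

lemma deriv2_ratio_antimono:
  assumes "0 < x" "x \<le> z" "0 \<le> s" "s \<le> 4" "t \<ge> -1"
  shows "deriv2_ratio s t z \<le> deriv2_ratio s t x"
proof -
  have "((z + 1) / 2) powr (- t - 1) \<le> ((x + 1) / 2) powr (- t - 1)"
    using assms by (intro powr_mono2') auto
  moreover have "((z + 1) / (2 * z)) powr s \<le> ((x + 1) / (2 * x)) powr s"
    using assms by (intro powr_mono2) (auto simp: field_simps)
  moreover have "4 - s + s / z \<le> 4 - s + s / x"
    using assms by (simp add: divide_left_mono)
  ultimately show ?thesis
    unfolding deriv2_ratio_def using assms by (intro mult_mono) auto
qed

lemma deriv2_ratio_eq:
  assumes "x > 0"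
  shows "deriv2_ratio s t x = 1 / x powr (s + 1) * ((x + 1) / 2) powr (s - t - 1) * ((4 - s) * x + s)"
proof -
  define y where "y = (x + 1) / 2"
  have "y > 0" and u: "(x + 1) / (2 * x) = y / x"
    using assms by (auto simp: y_def)
  have powrs: "y powr (- t - 1) = 1 / (y powr t * y)" "y powr (s - t - 1) = y powr s / (y powr t * y)"
    "(y / x) powr s = y powr s / x powr s" "x powr (s + 1) = x powr s * x"
    using \<open>y > 0\<close> assms by (simp_all add: powr_diff powr_minus_divide powr_divide powr_add)
  show ?thesis
    unfolding deriv2_ratio_def y_def[symmetric] u powrs
    using \<open>y > 0\<close> assms by (simp add: field_simps)
qed

lemma zeta_Omega_bounds_by_deriv2_ratio:
  assumes "p \<in> Gamma n" "q \<in> Gamma n" "0 < r" "\<And>i. i < n \<Longrightarrow> p i / q i \<in> {r..R}"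
    and "\<And>x. x \<in> {r..R} \<Longrightarrow> c \<le> deriv2_ratio s t x \<and> deriv2_ratio s t x \<le> C"
  shows "c * Omega t n q p \<le> zeta s n q p \<and> zeta s n q p \<le> C * Omega t n q p"
proof -
  have pos: "\<And>i. i < n \<Longrightarrow> p i > 0" "\<And>i. i < n \<Longrightarrow> q i > 0" "(\<Sum>i<n. q i) = 1"
    using assms(1,2) by (auto simp: Gamma_def)
  have "c * f_divergence (omega_gen t) n q p \<le> f_divergence (zeta_gen s) n q p \<and>
        f_divergence (zeta_gen s) n q p \<le> C * f_divergence (omega_gen t) n q p"
  proof (rule f_divergence_bounds_by_deriv2_ratio[OF assms(1,2) _ assms(4), where \<rho> = "deriv2_ratio s t"])
    fix x assume "x \<in> {r..R}"
    then have "x > 0" using assms(3) by simp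
    show "(omega_gen t has_real_derivative omega_gen_deriv t x) (at x)"
      "(omega_gen_deriv t has_real_derivative ((x + 1) / 2) powr (t - 2) / 4) (at x)"
      using \<open>x > 0\<close> by (intro has_real_derivative_omega_gen has_real_derivative_omega_gen_deriv; simp)+
    show "(zeta_gen s has_real_derivative zeta_gen_deriv s x) (at x)"
      "(zeta_gen_deriv s has_real_derivative
         ((x + 1) / (2 * x)) powr (s - 3) * ((4 - s) * x + s) / (4 * x ^ 4)) (at x)"
      using \<open>x > 0\<close> by (auto intro!: has_real_derivative_zeta_gen has_real_derivative_zeta_gen_deriv)
    show "((x + 1) / (2 * x)) powr (s - 3) * ((4 - s) * x + s) / (4 * x ^ 4)
            = deriv2_ratio s t x * (((x + 1) / 2) powr (t - 2) / 4)"
      using \<open>x > 0\<close> by (rule zeta_gen_deriv2_eq)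
  qed (use assms(5) in auto)
  then show ?thesis
    using pos by (simp add: Omega_eq_f_divergence zeta_eq_f_divergence)
qed

theorem theorem4p1:
  fixes n :: nat and p q :: "nat \<Rightarrow> real" and r R s t :: real
  assumes "n \<ge> 2"
    and "p \<in> Gamma n" and "q \<in> Gamma n"
    and "0 < r" and "r \<le> R"
    and "\<And>i. i < n \<Longrightarrow> r \<le> p i / q i \<and> p i / q i \<le> R"
    and "0 \<le> s" and "s \<le> 4" and "t \<ge> -1"
  shows "1 / R powr (s + 1) * ((R + 1) / 2) powr (s - t - 1) * ((4 - s) * R + s) * Omega t n q p
           \<le> zeta s n q p \<and>
         zeta s n q p
           \<le> 1 / r powr (s + 1) * ((r + 1) / 2) powr (s - t - 1) * ((4 - s) * R + s) * Omega t n q p"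
proof -
  define C where "C = 1 / r powr (s + 1) * ((r + 1) / 2) powr (s - t - 1) * ((4 - s) * R + s)"
  have "deriv2_ratio s t R \<le> deriv2_ratio s t x \<and> deriv2_ratio s t x \<le> C" if "x \<in> {r..R}" for x
  proof
    show "deriv2_ratio s t R \<le> deriv2_ratio s t x"
      using that assms(4,7-9) by (intro deriv2_ratio_antimono) auto
    have "deriv2_ratio s t x \<le> deriv2_ratio s t r"
      using that assms(4,7-9) by (intro deriv2_ratio_antimono) auto
    also have "\<dots> \<le> C"
      unfolding deriv2_ratio_eq[OF \<open>0 < r\<close>] C_def
      using assms(5,8) by (intro mult_left_mono) (auto intro: mult_left_mono)
    finally show "deriv2_ratio s t x \<le> C" .
  qed
  then have "deriv2_ratio s t R * Omega t n q p \<le> zeta s n q p \<and> zeta s n q p \<le> C * Omega t n q p"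
    using assms(2-4,6) by (intro zeta_Omega_bounds_by_deriv2_ratio) auto
  then show ?thesis
    using assms(4,5) by (simp add: deriv2_ratio_eq C_def)
qed

end
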